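(* Let $\alpha>0$ and let $X_1,\dots,X_n$ be i.i.d. with probability density $f_0$ on $[0,1]$ with $0<\rho_0\le f_0\le D_0<\infty$; set $g_0=\log f_0$. Let $h_n=(n/\log n)^{-1/(2\alpha+1)}$ and $L_n=\lfloor\log_2(1/h_n)\rfloor$. For each $n$ let $\{\mathcal A_{l,k}: 0\le l\le L_n,\ 0\le k\le2^l-1\}\subset L^\infty[0,1]$ (possibly depending on $n$) satisfy, for constants $c_1,c_2$ independent of $n,l,k$, $$\|\mathcal A_{l,k}\|_\infty\le c_1\sqrt{n/\log n},\qquad\|\mathcal A_{l,k}\|_2\le c_2 .$$ Define $\Gamma^{L_n}=g_0^{L_n}+n^{-1/2}\sum_{l=0}^{L_n}\sum_{k=0}^{2^l-1}W_n(\mathcal A_{l,k})\psi_{lk}$, where $g_0^{L_n}=\sum_{l\le L_n}\sum_k\langle g_0,\psi_{lk}\rangle_2\psi_{lk}$. Then there is a constant $C$ such that for all $n\ge2$, $$E_{f_0}^n\big\|\Gamma^{L_n}-g_0^{L_n}\big\|_\infty\le C\Big(\frac{\log n}{n}\Big)^{\alpha/(2\alpha+1)}.$$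
   Context: $W_n(u)=n^{-1/2}\sum_{i=1}^n\big(u(X_i)-\int_0^1uf_0\big)$. $\{\psi_{lk}: l\ge0,\ 0\le k\le2^l-1\}$ is the boundary-corrected (Cohen–Daubechies–Vial) wavelet orthonormal basis of $L^2[0,1]$, relabelled so levels start at $0$, with $\|\sum_k|\psi_{lk}|\|_\infty\lesssim2^{l/2}$. $E^n_{f_0}$ is expectation under i.i.d. $f_0$ sampling. *)

theory Defs
  imports "HOL-Probability.Probability"
begin

abbreviation leb01 :: "real measure" where
  "leb01 \<equiv> restrict_space lborel {0..1}"

definition inner01 :: "(real \<Rightarrow> real) \<Rightarrow> (real \<Rightarrow> real) \<Rightarrow> real" where
  "inner01 f g = (LINT x:{0..1}|lborel. f x * g x)"

definition linf01 :: "(real \<Rightarrow> real) \<Rightarrow> ereal" where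
  "linf01 f = esssup leb01 (\<lambda>x. ereal \<bar>f x\<bar>)"

definition sample_law :: "(real \<Rightarrow> real) \<Rightarrow> real measure" where
  "sample_law f0 = density leb01 (\<lambda>x. ennreal (f0 x))"

definition sample_space :: "(real \<Rightarrow> real) \<Rightarrow> nat \<Rightarrow> (nat \<Rightarrow> real) measure" where
  "sample_space f0 n = PiM {..<n} (\<lambda>_. sample_law f0)"

definition Wn :: "(real \<Rightarrow> real) \<Rightarrow> nat \<Rightarrow> (real \<Rightarrow> real) \<Rightarrow> (nat \<Rightarrow> real) \<Rightarrow> real" where
  "Wn f0 n u \<omega> = (1 / sqrt (real n)) * (\<Sum>i<n. u (\<omega> i) - (LINT x:{0..1}|lborel. u x * f0 x))"

definition hn :: "real \<Rightarrow> nat \<Rightarrow> real" where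
  "hn \<alpha> n = (real n / ln (real n)) powr (- 1 / (2 * \<alpha> + 1))"

definition Ln :: "real \<Rightarrow> nat \<Rightarrow> nat" where
  "Ln \<alpha> n = nat \<lfloor>log 2 (1 / hn \<alpha> n)\<rfloor>"

definition wproj :: "(nat \<Rightarrow> nat \<Rightarrow> real \<Rightarrow> real) \<Rightarrow> (real \<Rightarrow> real) \<Rightarrow> nat \<Rightarrow> real \<Rightarrow> real" where
  "wproj \<psi> g L x = (\<Sum>l\<le>L. \<Sum>k<2^l. inner01 g (\<psi> l k) * \<psi> l k x)"

definition Gamma :: "(nat \<Rightarrow> nat \<Rightarrow> real \<Rightarrow> real) \<Rightarrow> (real \<Rightarrow> real) \<Rightarrow> nat \<Rightarrow> nat
    \<Rightarrow> (nat \<Rightarrow> nat \<Rightarrow> real \<Rightarrow> real) \<Rightarrow> (nat \<Rightarrow> real) \<Rightarrow> real \<Rightarrow> real" where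
  "Gamma \<psi> f0 n L A \<omega> x = wproj \<psi> (\<lambda>y. ln (f0 y)) L x
     + (1 / sqrt (real n)) * (\<Sum>l\<le>L. \<Sum>k<2^l. Wn f0 n (A l k) \<omega> * \<psi> l k x)"

definition wavelet_onb :: "(nat \<Rightarrow> nat \<Rightarrow> real \<Rightarrow> real) \<Rightarrow> bool" where
  "wavelet_onb \<psi> \<longleftrightarrow>
     (\<forall>l k. \<psi> l k \<in> borel_measurable borel) \<and>
     (\<forall>l k. set_integrable lborel {0..1} (\<lambda>x. (\<psi> l k x)\<^sup>2)) \<and>
     (\<forall>l k l' k'. k < 2^l \<longrightarrow> k' < 2^l' \<longrightarrow>
        inner01 (\<psi> l k) (\<psi> l' k') = (if l = l' \<and> k = k' then 1 else 0)) \<and>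
     (\<forall>f. f \<in> borel_measurable borel \<longrightarrow> set_integrable lborel {0..1} (\<lambda>x. (f x)\<^sup>2) \<longrightarrow>
        (\<forall>l k. k < 2^l \<longrightarrow> inner01 f (\<psi> l k) = 0) \<longrightarrow>
        (AE x in lborel. x \<in> {0..1} \<longrightarrow> f x = 0))"

end

theory Submission
  imports Defs
begin

text \<open>
  Up to the factor n^(-1/2), Gamma^L - g0^L is the wavelet series with coefficients W_n(A_lk),
  and localisation of the wavelets bounds its sup norm by n^(-1/2) sum_l C 2^(l/2) max_k |W_n(A_lk)|.
  Bernstein's bound on the moment generating function of a bounded variable makes each W_n(A_lk)
  sub-Gaussian with variance proxy D0 c2^2 at all scales lam <= sqrt n / (2 |A_lk|_oo), that is up
  to lam ~ sqrt(log n); the soft-max argument then gives E max_k |W_n(A_lk)| <= (log 2^(l+1) +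
  lam^2 D0 c2^2 + 1) / lam = O(sqrt(log n)) for l <= L_n. The remaining geometric sum over the
  levels is dominated by its last term 2^(L_n/2) <= (n / log n)^(1/(4 alpha + 2)), which gives the
  rate (log n / n)^(alpha/(2 alpha + 1)).
\<close>

section \<open>Exponential moments and a maximal inequality\<close>

lemma exp_le_quadratic:
  fixes y :: real
  assumes "\<bar>y\<bar> \<le> 1"
  shows "exp y \<le> 1 + y + y\<^sup>2"
proof (cases "0 \<le> y")
  case True
  then show ?thesis using assms exp_bound[of y] by (simp add: power2_eq_square)
next
  case False
  define x where "x = - y"
  have x: "0 < x" "x \<le> 1" using assms False by (auto simp: x_def)
  have "exp y = inverse (exp x)" by (simp add: x_def exp_minus)
  also have "\<dots> \<le> inverse (1 + x)"
    using exp_ge_add_one_self[of x] x by (intro le_imp_inverse_le) auto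
  also have "\<dots> \<le> 1 - x + x\<^sup>2"
  proof -
    have "1 \<le> (1 + x) * (1 - x + x\<^sup>2)"
      using x by (simp add: algebra_simps power2_eq_square power3_eq_cube)
    then show ?thesis using x by (simp add: field_simps)
  qed
  finally show ?thesis by (simp add: x_def)
qed

lemma abs_le_soft_max:
  fixes w :: "'k \<Rightarrow> real"
  assumes "finite K" "k \<in> K" "0 < lam"
  shows "\<bar>w k\<bar> \<le> a / lam + (\<Sum>(j, s)\<in>K \<times> {-1, 1}. exp (- a) / lam * exp (s * lam * w j))"
proof -
  define s where "s = (if 0 \<le> w k then 1 else - 1 :: real)"
  have s: "s \<in> {-1, 1}" "s * w k = \<bar>w k\<bar>" by (auto simp: s_def)
  have "lam * \<bar>w k\<bar> - a \<le> exp (lam * \<bar>w k\<bar> - a)"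
    using exp_ge_add_one_self[of "lam * \<bar>w k\<bar> - a"] by linarith
  also have "\<dots> = exp (- a) * exp (s * lam * w k)"
    using s by (simp add: exp_diff exp_minus field_simps)
  also have "\<dots> \<le> (\<Sum>(j, s)\<in>K \<times> {-1, 1}. exp (- a) * exp (s * lam * w j))"
    using member_le_sum[of "(k, s)" "K \<times> {-1, 1}" "\<lambda>(j, s). exp (- a) * exp (s * lam * w j)"]
      assms s by auto
  finally have "\<bar>w k\<bar> \<le> (a + (\<Sum>(j, s)\<in>K \<times> {-1, 1}. exp (- a) * exp (s * lam * w j))) / lam"
    using assms(3) by (simp add: field_simps)
  then show ?thesis
    by (simp add: add_divide_distrib sum_divide_distrib case_prod_unfold)
qed

lemma nn_integral_sum_cmult_le:
  assumes "finite J"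
    and "\<And>j. j \<in> J \<Longrightarrow> f j \<in> borel_measurable M" "\<And>j x. j \<in> J \<Longrightarrow> 0 \<le> f j x"
    and "\<And>j. j \<in> J \<Longrightarrow> 0 \<le> c j" "\<And>j. j \<in> J \<Longrightarrow> 0 \<le> r j"
    and "\<And>j. j \<in> J \<Longrightarrow> (\<integral>\<^sup>+x. ennreal (f j x) \<partial>M) \<le> ennreal (r j)"
  shows "(\<integral>\<^sup>+x. ennreal (\<Sum>j\<in>J. c j * f j x) \<partial>M) \<le> ennreal (\<Sum>j\<in>J. c j * r j)"
proof -
  have "(\<integral>\<^sup>+x. ennreal (\<Sum>j\<in>J. c j * f j x) \<partial>M) = (\<integral>\<^sup>+x. (\<Sum>j\<in>J. ennreal (c j) * ennreal (f j x)) \<partial>M)"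
    using assms(3,4) by (intro nn_integral_cong) (simp add: sum_ennreal[symmetric] ennreal_mult)
  also have "\<dots> = (\<Sum>j\<in>J. ennreal (c j) * \<integral>\<^sup>+x. ennreal (f j x) \<partial>M)"
    using assms(2) by (simp add: nn_integral_sum nn_integral_cmult)
  also have "\<dots> \<le> (\<Sum>j\<in>J. ennreal (c j) * ennreal (r j))"
    using assms(6) by (intro sum_mono mult_left_mono) auto
  also have "\<dots> = ennreal (\<Sum>j\<in>J. c j * r j)"
    using assms(4,5) by (simp add: sum_ennreal[symmetric] ennreal_mult)
  finally show ?thesis .
qed

lemma nn_integral_exp_centered_le:
  fixes g :: "'a \<Rightarrow> real"
  assumes "prob_space M" and g: "g \<in> borel_measurable M"
    and bound: "AE x in M. \<bar>g x\<bar> \<le> b" and t: "\<bar>t\<bar> * (2 * b) \<le> 1"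
  shows "(\<integral>\<^sup>+x. ennreal (exp (t * (g x - (\<integral>y. g y \<partial>M)))) \<partial>M)
           \<le> ennreal (exp (t\<^sup>2 * (\<integral>y. (g y)\<^sup>2 \<partial>M)))"
proof -
  interpret prob_space M by fact
  define m where "m = (\<integral>y. g y \<partial>M)"
  define q where "q x = 1 + t * (g x - m) + (t * (g x - m))\<^sup>2" for x
  have ig: "integrable M g" using bound g by (intro integrable_const_bound[of _ b]) auto
  have ig2: "integrable M (\<lambda>x. (g x)\<^sup>2)"
    using bound g by (intro integrable_const_bound[of _ "b\<^sup>2"])
      (auto elim!: eventually_mono simp: power_mono[of "\<bar>_\<bar>" b 2, simplified])
  have q_expand: "q = (\<lambda>x. (1 - t * m + t\<^sup>2 * m\<^sup>2) + (t - 2 * t\<^sup>2 * m) * g x + t\<^sup>2 * (g x)\<^sup>2)"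
    by (auto simp: q_def fun_eq_iff power2_eq_square algebra_simps)
  have iq: "integrable M q" unfolding q_expand using ig ig2 by simp
  have "\<bar>m\<bar> \<le> (\<integral>y. b \<partial>M)"
    unfolding m_def using bound ig by (intro order_trans[OF integral_abs_bound] integral_mono_AE) auto
  then have m: "\<bar>m\<bar> \<le> b" by (simp add: prob_space)
  have exp_le_q: "AE x in M. exp (t * (g x - m)) \<le> q x"
    using bound
  proof eventually_elim
    case (elim x)
    have "\<bar>t * (g x - m)\<bar> \<le> \<bar>t\<bar> * (2 * b)"
      using elim m by (auto simp: abs_mult intro!: mult_left_mono)
    then show ?case unfolding q_def using t by (intro exp_le_quadratic) linarith
  qed
  have "(\<integral>\<^sup>+x. ennreal (exp (t * (g x - m))) \<partial>M) \<le> (\<integral>\<^sup>+x. ennreal (q x) \<partial>M)"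
    using exp_le_q by (intro nn_integral_mono_AE) (auto elim!: eventually_mono intro: ennreal_leI)
  also have "\<dots> = ennreal (\<integral>x. q x \<partial>M)"
    using exp_le_q iq by (intro nn_integral_eq_integral)
      (auto elim!: eventually_mono intro: order_trans[OF exp_ge_zero])
  also have "(\<integral>x. q x \<partial>M) = 1 + t\<^sup>2 * (\<integral>x. (g x)\<^sup>2 \<partial>M) - t\<^sup>2 * m\<^sup>2"
    using ig ig2 by (simp add: q_expand m_def prob_space power2_eq_square algebra_simps)
  also have "\<dots> \<le> exp (t\<^sup>2 * (\<integral>x. (g x)\<^sup>2 \<partial>M))"
    using exp_ge_add_one_self[of "t\<^sup>2 * (\<integral>x. (g x)\<^sup>2 \<partial>M)"] by (smt (verit) zero_le_power2 mult_nonneg_nonneg)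
  finally show ?thesis unfolding m_def by (simp add: ennreal_leI order_trans)
qed

lemma nn_integral_exp_sum_PiM:
  fixes h :: "'a \<Rightarrow> real"
  assumes "prob_space M" and h: "h \<in> borel_measurable M"
  shows "(\<integral>\<^sup>+\<omega>. ennreal (exp (\<Sum>i<n. h (\<omega> i))) \<partial>PiM {..<n} (\<lambda>_. M))
           = (\<integral>\<^sup>+x. ennreal (exp (h x)) \<partial>M) ^ n"
proof -
  interpret product_prob_space "\<lambda>_::nat. M"
    using assms(1) by (simp add: product_prob_space_def product_prob_space_axioms_def
        product_sigma_finite_def prob_space_imp_sigma_finite)
  have "(\<integral>\<^sup>+\<omega>. ennreal (exp (\<Sum>i<n. h (\<omega> i))) \<partial>PiM {..<n} (\<lambda>_. M))
      = (\<integral>\<^sup>+\<omega>. (\<Prod>i<n. ennreal (exp (h (\<omega> i)))) \<partial>PiM {..<n} (\<lambda>_. M))"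
    by (simp add: exp_sum prod_ennreal)
  also have "\<dots> = (\<Prod>i<n. \<integral>\<^sup>+x. ennreal (exp (h x)) \<partial>M)"
    using h by (intro product_nn_integral_prod) auto
  finally show ?thesis by simp
qed

lemma nn_integral_Max_abs_le:
  fixes W :: "'k \<Rightarrow> 'a \<Rightarrow> real" and lam \<sigma> :: real
  assumes "prob_space M" and K: "finite K" "K \<noteq> {}"
    and meas: "\<And>k. k \<in> K \<Longrightarrow> W k \<in> borel_measurable M"
    and lam: "0 < lam" and \<sigma>: "0 \<le> \<sigma>"
    and mgf: "\<And>k s. k \<in> K \<Longrightarrow> s \<in> {-1, 1} \<Longrightarrow>
               (\<integral>\<^sup>+\<omega>. ennreal (exp (s * lam * W k \<omega>)) \<partial>M) \<le> ennreal (exp (lam\<^sup>2 * \<sigma>))"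
  shows "(\<integral>\<^sup>+\<omega>. ennreal (Max ((\<lambda>k. \<bar>W k \<omega>\<bar>) ` K)) \<partial>M)
           \<le> ennreal ((ln (2 * real (card K)) + lam\<^sup>2 * \<sigma> + 1) / lam)"
proof -
  interpret prob_space M by fact
  \<comment> \<open>The threshold a makes the 2 card K exponential moments sum to exactly 1 / lam.\<close>
  define a where "a = ln (2 * real (card K)) + lam\<^sup>2 * \<sigma>"
  define e where "e = exp (- a) / lam"
  have "1 \<le> card K" using K by (simp add: Suc_le_eq card_gt_0_iff)
  then have a: "0 \<le> a" unfolding a_def using \<sigma> by simp
  have e: "0 \<le> e" unfolding e_def using lam by simp
  have Max_le: "Max ((\<lambda>k. \<bar>W k \<omega>\<bar>) ` K) \<le> a / lam + (\<Sum>(k, s)\<in>K \<times> {-1, 1}. e * exp (s * lam * W k \<omega>))"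
    for \<omega>
    using abs_le_soft_max[OF K(1) _ lam, of _ "\<lambda>k. W k \<omega>" a] K by (simp add: e_def)
  have soft_max_meas: "(\<lambda>\<omega>. \<Sum>(k, s)\<in>K \<times> {-1, 1}. e * exp (s * lam * W k \<omega>)) \<in> borel_measurable M"
  proof (intro borel_measurable_sum)
    fix j :: "'k \<times> real"
    assume "j \<in> K \<times> {-1, 1}"
    then have [measurable]: "W (fst j) \<in> borel_measurable M" using meas by auto
    show "(\<lambda>\<omega>. case j of (k, s) \<Rightarrow> e * exp (s * lam * W k \<omega>)) \<in> borel_measurable M"
      by (simp add: case_prod_unfold)
  qed
  have "(\<integral>\<^sup>+\<omega>. ennreal (Max ((\<lambda>k. \<bar>W k \<omega>\<bar>) ` K)) \<partial>M)
      \<le> (\<integral>\<^sup>+\<omega>. ennreal (a / lam) + ennreal (\<Sum>(k, s)\<in>K \<times> {-1, 1}. e * exp (s * lam * W k \<omega>)) \<partial>M)"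
    using Max_le a e lam
    by (intro nn_integral_mono)
      (simp add: ennreal_plus[symmetric] sum_nonneg case_prod_unfold ennreal_leI del: ennreal_plus)
  also have "\<dots> = ennreal (a / lam) + (\<integral>\<^sup>+\<omega>. ennreal (\<Sum>(k, s)\<in>K \<times> {-1, 1}. e * exp (s * lam * W k \<omega>)) \<partial>M)"
    using soft_max_meas by (subst nn_integral_add) (auto simp: emeasure_space_1)
  also have "(\<integral>\<^sup>+\<omega>. ennreal (\<Sum>(k, s)\<in>K \<times> {-1, 1}. e * exp (s * lam * W k \<omega>)) \<partial>M)
      \<le> ennreal (\<Sum>(k, s)\<in>K \<times> {-1, 1::real}. e * exp (lam\<^sup>2 * \<sigma>))"
    using nn_integral_sum_cmult_le[of "K \<times> {-1, 1}" "\<lambda>(k, s) \<omega>. exp (s * lam * W k \<omega>)" M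
        "\<lambda>_. e" "\<lambda>_. exp (lam\<^sup>2 * \<sigma>)"] meas mgf e K
    by (auto simp: case_prod_unfold)
  also have "(\<Sum>(k, s)\<in>K \<times> {-1, 1::real}. e * exp (lam\<^sup>2 * \<sigma>)) = 1 / lam"
    using \<open>1 \<le> card K\<close> lam
    by (simp add: card_cartesian_product e_def a_def exp_diff exp_minus exp_add field_simps)
  also have "ennreal (a / lam) + ennreal (1 / lam) = ennreal ((ln (2 * real (card K)) + lam\<^sup>2 * \<sigma> + 1) / lam)"
    using a lam by (subst ennreal_plus[symmetric]) (auto simp: a_def add_divide_distrib[symmetric])
  finally show ?thesis by simp
qed

lemma abs_sum_mult_le_Max:
  fixes w u :: "'k \<Rightarrow> real"
  assumes "finite K"
  shows "\<bar>\<Sum>k\<in>K. w k * u k\<bar> \<le> Max ((\<lambda>k. \<bar>w k\<bar>) ` K) * (\<Sum>k\<in>K. \<bar>u k\<bar>)"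
proof -
  have "\<bar>\<Sum>k\<in>K. w k * u k\<bar> \<le> (\<Sum>k\<in>K. \<bar>w k\<bar> * \<bar>u k\<bar>)"
    by (rule order_trans[OF sum_abs]) (simp add: abs_mult)
  also have "\<dots> \<le> (\<Sum>k\<in>K. Max ((\<lambda>k. \<bar>w k\<bar>) ` K) * \<bar>u k\<bar>)"
    using assms by (intro sum_mono mult_right_mono) auto
  finally show ?thesis by (simp add: sum_distrib_left)
qed

section \<open>Sup norm of localised wavelet series\<close>

lemma measurable_leb01: "u \<in> borel_measurable borel \<Longrightarrow> u \<in> borel_measurable leb01"
  by (intro measurable_restrict_space1) simp

lemma linf01_wavelet_sum_le:
  fixes \<psi> :: "nat \<Rightarrow> nat \<Rightarrow> real \<Rightarrow> real" and w :: "nat \<Rightarrow> nat \<Rightarrow> real"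
  assumes meas: "\<And>l k. \<psi> l k \<in> borel_measurable borel" and c: "0 \<le> c"
    and loc: "\<And>l. AE x in lborel. x \<in> {0..1} \<longrightarrow>
                (\<Sum>k<2^l. \<bar>\<psi> l k x\<bar>) \<le> C\<psi> * 2 powr (real l / 2)"
  shows "linf01 (\<lambda>x. c * (\<Sum>l\<le>L. \<Sum>k<2^l. w l k * \<psi> l k x))
           \<le> ereal (\<Sum>l\<le>L. c * \<bar>C\<psi>\<bar> * 2 powr (real l / 2) * Max ((\<lambda>k. \<bar>w l k\<bar>) ` {..<2^l}))"
  unfolding linf01_def
proof (rule esssup_I)
  note meas[measurable]
  show "(\<lambda>x. ereal \<bar>c * (\<Sum>l\<le>L. \<Sum>k<2^l. w l k * \<psi> l k x)\<bar>) \<in> borel_measurable leb01"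
    by (intro measurable_leb01) measurable
  have "AE x in lborel. \<forall>l\<in>{..L}. x \<in> {0..1} \<longrightarrow> (\<Sum>k<2^l. \<bar>\<psi> l k x\<bar>) \<le> C\<psi> * 2 powr (real l / 2)"
    using loc by (intro eventually_ball_finite) auto
  then have "AE x in leb01. \<forall>l\<in>{..L}. (\<Sum>k<2^l. \<bar>\<psi> l k x\<bar>) \<le> C\<psi> * 2 powr (real l / 2)"
    by (subst AE_restrict_space_iff) (auto elim!: eventually_mono)
  then show "AE x in leb01. ereal \<bar>c * (\<Sum>l\<le>L. \<Sum>k<2^l. w l k * \<psi> l k x)\<bar>
      \<le> ereal (\<Sum>l\<le>L. c * \<bar>C\<psi>\<bar> * 2 powr (real l / 2) * Max ((\<lambda>k. \<bar>w l k\<bar>) ` {..<2^l}))"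
  proof eventually_elim
    case (elim x)
    have "\<bar>c * (\<Sum>l\<le>L. \<Sum>k<2^l. w l k * \<psi> l k x)\<bar>
        \<le> c * (\<Sum>l\<le>L. Max ((\<lambda>k. \<bar>w l k\<bar>) ` {..<2^l}) * (\<Sum>k<2^l. \<bar>\<psi> l k x\<bar>))"
      using c by (auto simp: abs_mult intro!: mult_left_mono order_trans[OF sum_abs]
          sum_mono abs_sum_mult_le_Max)
    also have "\<dots> \<le> c * (\<Sum>l\<le>L. Max ((\<lambda>k. \<bar>w l k\<bar>) ` {..<2^l}) * (\<bar>C\<psi>\<bar> * 2 powr (real l / 2)))"
    proof (rule mult_left_mono[OF sum_mono c])
      fix l assume "l \<in> {..L}"
      then have "(\<Sum>k<2^l. \<bar>\<psi> l k x\<bar>) \<le> \<bar>C\<psi>\<bar> * 2 powr (real l / 2)"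
        using elim by (auto intro: order_trans mult_right_mono)
      moreover have "0 \<le> Max ((\<lambda>k. \<bar>w l k\<bar>) ` {..<2^l})"
        by (rule order_trans[OF abs_ge_zero Max_ge[of _ "\<bar>w l 0\<bar>"]]) auto
      ultimately show "Max ((\<lambda>k. \<bar>w l k\<bar>) ` {..<2^l}) * (\<Sum>k<2^l. \<bar>\<psi> l k x\<bar>)
          \<le> Max ((\<lambda>k. \<bar>w l k\<bar>) ` {..<2^l}) * (\<bar>C\<psi>\<bar> * 2 powr (real l / 2))"
        by (rule mult_left_mono)
    qed
    finally show ?case by (simp add: sum_distrib_left algebra_simps)
  qed
qed

section \<open>The resolution level and the rate\<close>

lemma sum_two_powr_half_le: "(\<Sum>l\<le>L. (2::real) powr (real l / 2)) \<le> 4 * 2 powr (real L / 2)"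
proof (induction L)
  case 0
  then show ?case by simp
next
  case (Suc L)
  have sqrt2: "1.4 \<le> sqrt (2::real)" by (rule real_le_rsqrt) (simp add: power2_eq_square)
  have step: "(2::real) powr (real (Suc L) / 2) = 2 powr (real L / 2) * sqrt 2"
    by (simp add: add_divide_distrib powr_add powr_half_sqrt)
  have "(\<Sum>l\<le>Suc L. (2::real) powr (real l / 2)) \<le> 2 powr (real L / 2) * (4 + sqrt 2)"
    using Suc step by (simp add: algebra_simps)
  also have "\<dots> \<le> 2 powr (real L / 2) * (4 * sqrt 2)"
    using sqrt2 by (intro mult_left_mono) auto
  finally show ?case using step by (simp add: algebra_simps)
qed

lemma one_le_div_ln:
  assumes "2 \<le> n"
  shows "1 \<le> real n / ln (real n)"
proof -
  have "0 < ln (real n)" "ln (real n) < real n" using assms by (simp_all add: ln_less_self)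
  then show ?thesis by simp
qed

lemma two_powr_Ln_le:
  assumes "0 < \<alpha>" "2 \<le> n"
  shows "2 powr real (Ln \<alpha> n) \<le> (real n / ln (real n)) powr (1 / (2 * \<alpha> + 1))"
proof -
  have hn_inv: "1 / hn \<alpha> n = (real n / ln (real n)) powr (1 / (2 * \<alpha> + 1))"
    unfolding hn_def minus_divide_left by (simp add: powr_minus_divide)
  have ge1: "1 \<le> 1 / hn \<alpha> n"
    unfolding hn_inv using one_le_div_ln[OF assms(2)] assms(1) by (intro ge_one_powr_ge_zero) auto
  then have "0 \<le> log 2 (1 / hn \<alpha> n)" unfolding log_def by (intro divide_nonneg_pos ln_ge_zero) auto
  then have "real (Ln \<alpha> n) \<le> log 2 (1 / hn \<alpha> n)"
    unfolding Ln_def by simp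
  then have "2 powr real (Ln \<alpha> n) \<le> 2 powr log 2 (1 / hn \<alpha> n)" by simp
  also have "\<dots> = 1 / hn \<alpha> n" using ge1 by (intro powr_log_cancel) linarith+
  finally show ?thesis by (simp only: hn_inv)
qed

lemma Ln_mult_ln2_le:
  assumes "0 < \<alpha>" "2 \<le> n"
  shows "real (Ln \<alpha> n) * ln 2 \<le> ln 2 + ln (real n)"
proof -
  define q where "q = real n / ln (real n)"
  have ln_n: "ln 2 \<le> ln (real n)" using assms by simp
  have q1: "1 \<le> q" unfolding q_def using assms(2) by (rule one_le_div_ln)
  have "1 \<le> 2 * ln (real n)" using ln_n ln2_ge_two_thirds by linarith
  then have "q \<le> 2 * real n"
    unfolding q_def using assms by (simp add: field_simps)
  have "2 powr real (Ln \<alpha> n) \<le> q powr (1 / (2 * \<alpha> + 1))"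
    unfolding q_def using assms by (rule two_powr_Ln_le)
  also have "\<dots> \<le> q powr 1" using q1 assms by (intro powr_mono) auto
  also have "\<dots> = q" using q1 by simp
  also have "\<dots> \<le> 2 * real n" by fact
  finally have le: "2 powr real (Ln \<alpha> n) \<le> 2 * real n" .
  have "real (Ln \<alpha> n) * ln 2 = ln (2 powr real (Ln \<alpha> n))" by simp
  also have "\<dots> \<le> ln (2 * real n)" using le by (rule ln_mono) simp
  also have "\<dots> = ln 2 + ln (real n)" using assms by (simp add: ln_mult)
  finally show ?thesis .
qed

lemma sqrt_ln_mult_two_powr_Ln_le:
  assumes "0 < \<alpha>" "2 \<le> n"
  shows "sqrt (ln (real n)) / sqrt (real n) * 2 powr (real (Ln \<alpha> n) / 2)
           \<le> (ln (real n) / real n) powr (\<alpha> / (2 * \<alpha> + 1))"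
proof -
  define r where "r = ln (real n) / real n"
  define p where "p = 1 / (2 * \<alpha> + 1)"
  have r: "0 < r" unfolding r_def using assms by simp
  have "2 powr (real (Ln \<alpha> n) / 2) = sqrt (2 powr real (Ln \<alpha> n))"
    by (simp add: powr_half_sqrt_powr)
  also have "\<dots> \<le> sqrt ((1 / r) powr p)"
    using two_powr_Ln_le[OF assms] by (simp add: r_def p_def)
  also have "\<dots> = (1 / r) powr (p / 2)"
    using r by (simp add: powr_half_sqrt_powr)
  also have "\<dots> = r powr (- p / 2)"
    using r by (simp add: powr_divide powr_minus_divide)
  finally have "sqrt (ln (real n)) / sqrt (real n) * 2 powr (real (Ln \<alpha> n) / 2) \<le> r powr (1 / 2) * r powr (- p / 2)"
    using assms by (intro mult_mono) (auto simp: r_def powr_half_sqrt real_sqrt_divide)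
  also have "\<dots> = r powr (1 / 2 + - p / 2)"
    by (rule powr_add[symmetric])
  also have "1 / 2 + - p / 2 = \<alpha> / (2 * \<alpha> + 1)"
    unfolding p_def using assms by (simp add: field_simps)
  finally show ?thesis unfolding r_def .
qed

lemma level_sum_rate_le:
  fixes \<alpha> c \<sigma> :: real and n :: nat
  assumes \<alpha>: "0 < \<alpha>" and n: "2 \<le> n" and c: "1 \<le> c" and \<sigma>: "0 \<le> \<sigma>"
  defines "lam \<equiv> sqrt (ln (real n)) / (2 * c)"
  shows "(\<Sum>l\<le>Ln \<alpha> n. 1 / sqrt (real n) * 2 powr (real l / 2) * ((ln (2 * 2 ^ l) + lam\<^sup>2 * \<sigma> + 1) / lam))
           \<le> 4 * (10 * c + \<sigma> / (2 * c)) * (ln (real n) / real n) powr (\<alpha> / (2 * \<alpha> + 1))"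
proof -
  define L where "L = Ln \<alpha> n"
  define K where "K = 10 * c + \<sigma> / (2 * c)"
  have ln_n: "ln 2 \<le> ln (real n)" "0 < ln (real n)" using n by auto
  have lam: "0 < lam" unfolding lam_def using ln_n c by simp
  have K: "0 \<le> K" unfolding K_def using c \<sigma> by simp
  have level_term: "(ln (2 * 2 ^ l) + lam\<^sup>2 * \<sigma> + 1) / lam \<le> K * sqrt (ln (real n))" if "l \<le> L" for l
  proof -
    have "ln (2 * 2 ^ l) = (real l + 1) * ln 2" by (simp add: ln_mult ln_realpow algebra_simps)
    also have "\<dots> \<le> (real L + 1) * ln 2" using that by (intro mult_right_mono) auto
    also have "\<dots> \<le> 2 * ln 2 + ln (real n)"
      using Ln_mult_ln2_le[OF \<alpha> n] unfolding L_def by (simp add: algebra_simps)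
    finally have "ln (2 * 2 ^ l) + 1 \<le> 5 * ln (real n)"
      using ln_n ln2_ge_two_thirds by linarith
    then have "(ln (2 * 2 ^ l) + 1) / lam \<le> 5 * ln (real n) / lam"
      using lam by (intro divide_right_mono) auto
    also have "\<dots> = 10 * c * sqrt (ln (real n))"
      unfolding lam_def using ln_n c by (simp add: field_simps)
    finally have "(ln (2 * 2 ^ l) + 1) / lam \<le> 10 * c * sqrt (ln (real n))" .
    moreover have "lam\<^sup>2 * \<sigma> / lam = \<sigma> / (2 * c) * sqrt (ln (real n))"
    proof -
      have "lam\<^sup>2 * \<sigma> / lam = lam * \<sigma>" using lam by (simp add: power2_eq_square)
      then show ?thesis unfolding lam_def by simp
    qed
    ultimately show ?thesis unfolding K_def by (simp add: add_divide_distrib algebra_simps)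
  qed
  have "(\<Sum>l\<le>L. 1 / sqrt (real n) * 2 powr (real l / 2) * ((ln (2 * 2 ^ l) + lam\<^sup>2 * \<sigma> + 1) / lam))
      \<le> (\<Sum>l\<le>L. 1 / sqrt (real n) * 2 powr (real l / 2) * (K * sqrt (ln (real n))))"
    using level_term by (intro sum_mono mult_left_mono) auto
  also have "\<dots> = K * (sqrt (ln (real n)) / sqrt (real n)) * (\<Sum>l\<le>L. 2 powr (real l / 2))"
    by (simp add: sum_distrib_left algebra_simps)
  also have "\<dots> \<le> K * (sqrt (ln (real n)) / sqrt (real n)) * (4 * 2 powr (real L / 2))"
    using K ln_n by (intro mult_left_mono sum_two_powr_half_le) auto
  also have "\<dots> = 4 * K * (sqrt (ln (real n)) / sqrt (real n) * 2 powr (real L / 2))" by simp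
  also have "\<dots> \<le> 4 * K * (ln (real n) / real n) powr (\<alpha> / (2 * \<alpha> + 1))"
    using K unfolding L_def by (intro mult_left_mono sqrt_ln_mult_two_powr_Ln_le \<alpha> n) auto
  finally show ?thesis unfolding L_def K_def .
qed

section \<open>The empirical process of a sample with bounded density\<close>

context
  fixes f0 :: "real \<Rightarrow> real" and D0 :: real
  assumes f0_meas: "f0 \<in> borel_measurable borel"
    and f0_bounds: "\<And>x. x \<in> {0..1} \<Longrightarrow> 0 \<le> f0 x \<and> f0 x \<le> D0"
    and f0_density: "(LINT x:{0..1}|lborel. f0 x) = 1"
begin

lemma measurable_sample_law:
  "u \<in> borel_measurable borel \<Longrightarrow> u \<in> borel_measurable (sample_law f0)"
  unfolding sample_law_def by (simp add: measurable_leb01)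

lemma AE_f0_bounds: "AE x in leb01. 0 \<le> f0 x \<and> f0 x \<le> D0"
  using f0_bounds by (intro AE_I2) (simp add: space_restrict_space)

lemma prob_space_sample_law: "prob_space (sample_law f0)"
proof (rule prob_spaceI)
  interpret leb01: prob_space leb01 by (intro prob_space_restrict_space) auto
  have "emeasure (sample_law f0) (space (sample_law f0)) = (\<integral>\<^sup>+x. ennreal (f0 x) \<partial>leb01)"
    unfolding sample_law_def using measurable_leb01[OF f0_meas] sets.top[of leb01]
    by (subst emeasure_density) (auto intro!: nn_integral_cong simp: space_restrict_space)
  also have "\<dots> = ennreal (\<integral>x. f0 x \<partial>leb01)"
  proof (rule nn_integral_eq_integral)
    have "AE x in leb01. norm (f0 x) \<le> D0" using AE_f0_bounds by eventually_elim auto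
    then show "integrable leb01 f0"
      using measurable_leb01[OF f0_meas] by (intro leb01.integrable_const_bound) auto
    show "AE x in leb01. 0 \<le> f0 x" using AE_f0_bounds by eventually_elim auto
  qed
  also have "(\<integral>x. f0 x \<partial>leb01) = 1"
    using f0_density by (subst integral_restrict_space) (auto simp: set_lebesgue_integral_def)
  finally show "emeasure (sample_law f0) (space (sample_law f0)) = 1" by simp
qed

lemma prob_space_sample_space: "prob_space (sample_space f0 n)"
  unfolding sample_space_def by (intro prob_space_PiM prob_space_sample_law)

lemma integral_sample_law:
  assumes "u \<in> borel_measurable borel"
  shows "(\<integral>x. u x \<partial>sample_law f0) = (LINT x:{0..1}|lborel. u x * f0 x)"
proof -
  have "(\<integral>x. u x \<partial>sample_law f0) = (\<integral>x. f0 x *\<^sub>R u x \<partial>leb01)"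
    unfolding sample_law_def using AE_f0_bounds measurable_leb01[OF f0_meas] measurable_leb01[OF assms]
    by (intro integral_density) (auto elim!: eventually_mono)
  also have "\<dots> = (LINT x:{0..1}|lborel. u x * f0 x)"
    by (subst integral_restrict_space) (auto simp: set_lebesgue_integral_def mult.commute)
  finally show ?thesis .
qed

lemma AE_sample_law:
  assumes "AE x in lborel. x \<in> {0..1} \<longrightarrow> P x"
  shows "AE x in sample_law f0. P x"
proof -
  have "AE x in leb01. P x" using assms by (subst AE_restrict_space_iff) auto
  then show ?thesis unfolding sample_law_def using measurable_leb01[OF f0_meas]
    by (subst AE_density) (auto elim: eventually_mono)
qed

lemma nn_integral_sample_law_le:
  assumes "u \<in> borel_measurable borel"
  shows "(\<integral>\<^sup>+x. ennreal (u x) \<partial>sample_law f0) \<le> ennreal D0 * (\<integral>\<^sup>+x\<in>{0..1}. ennreal (u x) \<partial>lborel)"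
proof -
  have "(\<integral>\<^sup>+x. ennreal (u x) \<partial>sample_law f0) = (\<integral>\<^sup>+x. ennreal (f0 x) * ennreal (u x) \<partial>leb01)"
    unfolding sample_law_def using measurable_leb01[OF f0_meas] measurable_leb01[OF assms]
    by (subst nn_integral_density) auto
  also have "\<dots> \<le> (\<integral>\<^sup>+x. ennreal D0 * ennreal (u x) \<partial>leb01)"
    using f0_bounds
    by (intro nn_integral_mono) (auto simp: space_restrict_space intro!: mult_right_mono ennreal_leI)
  also have "\<dots> = ennreal D0 * (\<integral>\<^sup>+x. ennreal (u x) \<partial>leb01)"
    using measurable_leb01[OF assms] by (intro nn_integral_cmult) auto
  also have "(\<integral>\<^sup>+x. ennreal (u x) \<partial>leb01) = (\<integral>\<^sup>+x\<in>{0..1}. ennreal (u x) \<partial>lborel)"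
    by (subst nn_integral_restrict_space) auto
  finally show ?thesis .
qed

lemma measurable_Wn:
  assumes "u \<in> borel_measurable borel"
  shows "Wn f0 n u \<in> borel_measurable (sample_space f0 n)"
proof -
  note measurable_sample_law[OF assms, measurable]
  show ?thesis unfolding Wn_def sample_space_def by measurable
qed

lemma D0_nonneg: "0 \<le> D0"
  using f0_bounds[of 0] by simp

lemma Wn_mgf_le:
  fixes A :: "real \<Rightarrow> real"
  assumes n: "1 \<le> n" and A: "A \<in> borel_measurable borel"
    and sup: "AE x in lborel. x \<in> {0..1} \<longrightarrow> \<bar>A x\<bar> \<le> b"
    and L2: "(\<integral>\<^sup>+x\<in>{0..1}. ennreal ((A x)\<^sup>2) \<partial>lborel) \<le> ennreal (c2\<^sup>2)"
    and s: "\<bar>s\<bar> = 1" and lam: "0 \<le> lam" "lam * (2 * b) \<le> sqrt (real n)"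
  shows "(\<integral>\<^sup>+\<omega>. ennreal (exp (s * lam * Wn f0 n A \<omega>)) \<partial>sample_space f0 n)
           \<le> ennreal (exp (lam\<^sup>2 * (D0 * c2\<^sup>2)))"
proof -
  define P where "P = sample_law f0"
  interpret P: prob_space P unfolding P_def by (rule prob_space_sample_law)
  have AP: "A \<in> borel_measurable P" unfolding P_def using A by (rule measurable_sample_law)
  have supP: "AE x in P. \<bar>A x\<bar> \<le> b" unfolding P_def using sup by (rule AE_sample_law)
  define t where "t = s * lam / sqrt (real n)"
  have sqrt_n: "0 < sqrt (real n)" using n by simp
  have t: "\<bar>t\<bar> * (2 * b) \<le> 1"
    using lam sqrt_n s by (simp add: t_def abs_mult field_simps)
  have second_moment: "(\<integral>x. (A x)\<^sup>2 \<partial>P) \<le> D0 * c2\<^sup>2"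
  proof -
    have "AE x in P. norm ((A x)\<^sup>2) \<le> b\<^sup>2"
      using supP by eventually_elim (simp add: power_mono[of "\<bar>_\<bar>" b 2, simplified])
    then have "ennreal (\<integral>x. (A x)\<^sup>2 \<partial>P) = (\<integral>\<^sup>+x. ennreal ((A x)\<^sup>2) \<partial>P)"
      using AP by (intro nn_integral_eq_integral[symmetric] P.integrable_const_bound) auto
    also have "\<dots> \<le> ennreal D0 * ennreal (c2\<^sup>2)"
      unfolding P_def using A L2 by (intro order_trans[OF nn_integral_sample_law_le] mult_left_mono) auto
    also have "\<dots> = ennreal (D0 * c2\<^sup>2)" using D0_nonneg by (simp add: ennreal_mult)
    finally show ?thesis using D0_nonneg by (subst (asm) ennreal_le_iff) auto
  qed
  have "s * lam * Wn f0 n A \<omega> = (\<Sum>i<n. t * (A (\<omega> i) - (\<integral>x. A x \<partial>P)))" for \<omega>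
    unfolding Wn_def t_def P_def integral_sample_law[OF A] using sqrt_n
    by (simp add: sum_distrib_left field_simps)
  then have "(\<integral>\<^sup>+\<omega>. ennreal (exp (s * lam * Wn f0 n A \<omega>)) \<partial>sample_space f0 n)
      = (\<integral>\<^sup>+x. ennreal (exp (t * (A x - (\<integral>x. A x \<partial>P)))) \<partial>P) ^ n"
    unfolding sample_space_def P_def[symmetric] using AP
    by (simp add: nn_integral_exp_sum_PiM[OF P.prob_space_axioms, where h="\<lambda>x. t * (A x - (\<integral>x. A x \<partial>P))"])
  also have "\<dots> \<le> ennreal (exp (t\<^sup>2 * (\<integral>x. (A x)\<^sup>2 \<partial>P))) ^ n"
    by (intro power_mono nn_integral_exp_centered_le[where b=b] P.prob_space_axioms AP supP t) auto
  also have "\<dots> = ennreal (exp (real n * t\<^sup>2 * (\<integral>x. (A x)\<^sup>2 \<partial>P)))"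
    by (simp add: ennreal_power exp_of_nat_mult[symmetric] mult.assoc)
  also have "real n * t\<^sup>2 = lam\<^sup>2"
  proof -
    have "s\<^sup>2 = 1" using s by (metis power2_abs power_one)
    then show ?thesis using sqrt_n by (simp add: t_def power_divide power_mult_distrib)
  qed
  also have "ennreal (exp (lam\<^sup>2 * (\<integral>x. (A x)\<^sup>2 \<partial>P))) \<le> ennreal (exp (lam\<^sup>2 * (D0 * c2\<^sup>2)))"
    using second_moment by (intro ennreal_leI) (auto intro: mult_left_mono)
  finally show ?thesis .
qed

lemma nn_integral_Max_abs_Wn_le:
  fixes A :: "'k \<Rightarrow> real \<Rightarrow> real"
  assumes n: "2 \<le> n" and K: "finite K" "K \<noteq> {}" and c: "0 < c"
    and meas: "\<And>k. k \<in> K \<Longrightarrow> A k \<in> borel_measurable borel"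
    and sup: "\<And>k. k \<in> K \<Longrightarrow>
               AE x in lborel. x \<in> {0..1} \<longrightarrow> \<bar>A k x\<bar> \<le> c * sqrt (real n / ln (real n))"
    and L2: "\<And>k. k \<in> K \<Longrightarrow> (\<integral>\<^sup>+x\<in>{0..1}. ennreal ((A k x)\<^sup>2) \<partial>lborel) \<le> ennreal (c2\<^sup>2)"
  defines "lam \<equiv> sqrt (ln (real n)) / (2 * c)"
  shows "(\<integral>\<^sup>+\<omega>. ennreal (Max ((\<lambda>k. \<bar>Wn f0 n (A k) \<omega>\<bar>) ` K)) \<partial>sample_space f0 n)
           \<le> ennreal ((ln (2 * real (card K)) + lam\<^sup>2 * (D0 * c2\<^sup>2) + 1) / lam)"
proof (rule nn_integral_Max_abs_le[OF prob_space_sample_space K])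
  have ln_n: "0 < ln (real n)" using n by simp
  then show lam: "0 < lam" unfolding lam_def using c by simp
  show "0 \<le> D0 * c2\<^sup>2" using D0_nonneg by simp
  show "Wn f0 n (A k) \<in> borel_measurable (sample_space f0 n)" if "k \<in> K" for k
    using meas[OF that] by (rule measurable_Wn)
  \<comment> \<open>lam is the largest scale at which the bounded-MGF estimate applies to every A k.\<close>
  have "lam * (2 * (c * sqrt (real n / ln (real n)))) = sqrt (real n)"
    unfolding lam_def using ln_n c by (simp add: real_sqrt_divide field_simps)
  then show "(\<integral>\<^sup>+\<omega>. ennreal (exp (s * lam * Wn f0 n (A k) \<omega>)) \<partial>sample_space f0 n)
      \<le> ennreal (exp (lam\<^sup>2 * (D0 * c2\<^sup>2)))" if "k \<in> K" "s \<in> {-1, 1}" for k s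
    using that n lam by (intro Wn_mgf_le[where b="c * sqrt (real n / ln (real n))"] meas sup L2) auto
qed

lemma nn_integral_linf01_wavelet_noise_le:
  fixes \<psi> :: "nat \<Rightarrow> nat \<Rightarrow> real \<Rightarrow> real" and A :: "nat \<Rightarrow> nat \<Rightarrow> real \<Rightarrow> real"
  assumes \<alpha>: "0 < \<alpha>" and n: "2 \<le> n" and c: "1 \<le> c"
    and psi_meas: "\<And>l k. \<psi> l k \<in> borel_measurable borel"
    and psi_loc: "\<And>l. AE x in lborel. x \<in> {0..1} \<longrightarrow>
                    (\<Sum>k<2^l. \<bar>\<psi> l k x\<bar>) \<le> C\<psi> * 2 powr (real l / 2)"
    and A_meas: "\<And>l k. l \<le> Ln \<alpha> n \<Longrightarrow> k < 2^l \<Longrightarrow> A l k \<in> borel_measurable borel"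
    and A_sup: "\<And>l k. l \<le> Ln \<alpha> n \<Longrightarrow> k < 2^l \<Longrightarrow>
                  AE x in lborel. x \<in> {0..1} \<longrightarrow> \<bar>A l k x\<bar> \<le> c * sqrt (real n / ln (real n))"
    and A_L2: "\<And>l k. l \<le> Ln \<alpha> n \<Longrightarrow> k < 2^l \<Longrightarrow>
                 (\<integral>\<^sup>+x\<in>{0..1}. ennreal ((A l k x)\<^sup>2) \<partial>lborel) \<le> ennreal (c2\<^sup>2)"
  shows "(\<integral>\<^sup>+\<omega>. e2ennreal (linf01 (\<lambda>x. 1 / sqrt (real n) *
                (\<Sum>l\<le>Ln \<alpha> n. \<Sum>k<2^l. Wn f0 n (A l k) \<omega> * \<psi> l k x))) \<partial>sample_space f0 n)
           \<le> ennreal (\<bar>C\<psi>\<bar> * (4 * (10 * c + D0 * c2\<^sup>2 / (2 * c)))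
                       * (ln (real n) / real n) powr (\<alpha> / (2 * \<alpha> + 1)))"
proof -
  define L where "L = Ln \<alpha> n"
  define \<sigma> where "\<sigma> = D0 * c2\<^sup>2"
  define lam where "lam = sqrt (ln (real n)) / (2 * c)"
  define M where "M l \<omega> = Max ((\<lambda>k. \<bar>Wn f0 n (A l k) \<omega>\<bar>) ` {..<2^l})" for l \<omega>
  have \<sigma>: "0 \<le> \<sigma>" unfolding \<sigma>_def using D0_nonneg by simp
  have lam: "0 < lam" unfolding lam_def using n c by simp
  have M_nonneg: "0 \<le> M l \<omega>" for l \<omega>
    unfolding M_def by (rule order_trans[OF abs_ge_zero Max_ge[of _ "\<bar>Wn f0 n (A l 0) \<omega>\<bar>"]]) auto
  have M_meas: "M l \<in> borel_measurable (sample_space f0 n)" if "l \<le> L" for l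
    unfolding M_def using that A_meas measurable_Wn
    by (intro borel_measurable_Max) (auto simp: L_def)
  have sup_norm: "e2ennreal (linf01 (\<lambda>x. 1 / sqrt (real n) * (\<Sum>l\<le>L. \<Sum>k<2^l. Wn f0 n (A l k) \<omega> * \<psi> l k x)))
      \<le> ennreal (\<Sum>l\<le>L. 1 / sqrt (real n) * \<bar>C\<psi>\<bar> * 2 powr (real l / 2) * M l \<omega>)" for \<omega>
    using linf01_wavelet_sum_le[OF psi_meas _ psi_loc, where c="1 / sqrt (real n)" and L=L
        and w="\<lambda>l k. Wn f0 n (A l k) \<omega>"]
    unfolding M_def by (simp add: e2ennreal_mono flip: e2ennreal_ereal)
  have level: "(\<integral>\<^sup>+\<omega>. ennreal (M l \<omega>) \<partial>sample_space f0 n) \<le> ennreal ((ln (2 * 2 ^ l) + lam\<^sup>2 * \<sigma> + 1) / lam)"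
    if "l \<le> L" for l
  proof -
    have "(\<integral>\<^sup>+\<omega>. ennreal (M l \<omega>) \<partial>sample_space f0 n)
        \<le> ennreal ((ln (2 * real (card {..<(2::nat)^l})) + lam\<^sup>2 * (D0 * c2\<^sup>2) + 1) / lam)"
      unfolding M_def lam_def using that A_meas A_sup A_L2 c
      by (intro nn_integral_Max_abs_Wn_le[OF n]) (auto simp: L_def lessThan_empty_iff)
    then show ?thesis by (simp add: \<sigma>_def)
  qed
  have ln_level: "0 \<le> ln (2 * 2 ^ l :: real)" for l :: nat
    using one_le_power[of "2::real" l] by (intro ln_ge_zero) linarith
  have "(\<integral>\<^sup>+\<omega>. e2ennreal (linf01 (\<lambda>x. 1 / sqrt (real n) *
            (\<Sum>l\<le>L. \<Sum>k<2^l. Wn f0 n (A l k) \<omega> * \<psi> l k x))) \<partial>sample_space f0 n)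
      \<le> (\<integral>\<^sup>+\<omega>. ennreal (\<Sum>l\<le>L. 1 / sqrt (real n) * \<bar>C\<psi>\<bar> * 2 powr (real l / 2) * M l \<omega>) \<partial>sample_space f0 n)"
    by (intro nn_integral_mono sup_norm)
  also have "\<dots> \<le> ennreal (\<Sum>l\<le>L. 1 / sqrt (real n) * \<bar>C\<psi>\<bar> * 2 powr (real l / 2)
                              * ((ln (2 * 2 ^ l) + lam\<^sup>2 * \<sigma> + 1) / lam))"
    using M_meas M_nonneg level lam \<sigma> ln_level by (intro nn_integral_sum_cmult_le) auto
  also have "\<dots> = ennreal (\<bar>C\<psi>\<bar> * (\<Sum>l\<le>L. 1 / sqrt (real n) * 2 powr (real l / 2)
                                * ((ln (2 * 2 ^ l) + lam\<^sup>2 * \<sigma> + 1) / lam)))"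
    by (simp add: sum_distrib_left ac_simps)
  also have "\<dots> \<le> ennreal (\<bar>C\<psi>\<bar> * (4 * (10 * c + \<sigma> / (2 * c))) * (ln (real n) / real n) powr (\<alpha> / (2 * \<alpha> + 1)))"
    unfolding L_def lam_def mult.assoc[of "\<bar>C\<psi>\<bar>"]
    by (intro ennreal_leI mult_left_mono level_sum_rate_le \<alpha> n c \<sigma>) simp
  finally show ?thesis unfolding L_def \<sigma>_def .
qed

end

theorem lemma7:
  fixes \<alpha> \<rho>0 D0 c1 c2 C\<psi> :: real
    and f0 :: "real \<Rightarrow> real"
    and \<psi> :: "nat \<Rightarrow> nat \<Rightarrow> real \<Rightarrow> real"
    and A :: "nat \<Rightarrow> nat \<Rightarrow> nat \<Rightarrow> real \<Rightarrow> real"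
  assumes alpha_pos: "\<alpha> > 0"
    and f0_meas: "f0 \<in> borel_measurable borel"
    and f0_bounds: "0 < \<rho>0" "\<And>x. x \<in> {0..1} \<Longrightarrow> \<rho>0 \<le> f0 x \<and> f0 x \<le> D0"
    and f0_density: "(LINT x:{0..1}|lborel. f0 x) = 1"
    and psi_onb: "wavelet_onb \<psi>"
    and psi_loc: "\<And>l. AE x in lborel. x \<in> {0..1} \<longrightarrow>
                     (\<Sum>k<2^l. \<bar>\<psi> l k x\<bar>) \<le> C\<psi> * 2 powr (real l / 2)"
    and A_meas: "\<And>n l k. n \<ge> 2 \<Longrightarrow> l \<le> Ln \<alpha> n \<Longrightarrow> k < 2^l \<Longrightarrow>
                   A n l k \<in> borel_measurable borel"
    and A_inf: "\<And>n l k. n \<ge> 2 \<Longrightarrow> l \<le> Ln \<alpha> n \<Longrightarrow> k < 2^l \<Longrightarrow>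
                   AE x in lborel. x \<in> {0..1} \<longrightarrow> \<bar>A n l k x\<bar> \<le> c1 * sqrt (real n / ln (real n))"
    and A_L2: "\<And>n l k. n \<ge> 2 \<Longrightarrow> l \<le> Ln \<alpha> n \<Longrightarrow> k < 2^l \<Longrightarrow>
                   (\<integral>\<^sup>+ x\<in>{0..1}. ennreal ((A n l k x)\<^sup>2) \<partial>lborel) \<le> ennreal (c2\<^sup>2)"
  shows "\<exists>C. \<forall>n\<ge>2.
           (\<integral>\<^sup>+ \<omega>. e2ennreal (linf01 (\<lambda>x. Gamma \<psi> f0 n (Ln \<alpha> n) (A n) \<omega> x
                                              - wproj \<psi> (\<lambda>y. ln (f0 y)) (Ln \<alpha> n) x))
              \<partial>sample_space f0 n)
           \<le> ennreal (C * (ln (real n) / real n) powr (\<alpha> / (2 * \<alpha> + 1)))"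
proof -
  define c where "c = max c1 1"
  have sample: "f0 \<in> borel_measurable borel" "\<And>x. x \<in> {0..1} \<Longrightarrow> 0 \<le> f0 x \<and> f0 x \<le> D0"
    "(LINT x:{0..1}|lborel. f0 x) = 1"
    using f0_meas f0_bounds f0_density by force+
  have psi_meas: "\<And>l k. \<psi> l k \<in> borel_measurable borel"
    using psi_onb unfolding wavelet_onb_def by blast
  show ?thesis
  proof (intro exI allI impI)
    fix n :: nat
    assume n: "2 \<le> n"
    have "c1 * sqrt (real n / ln (real n)) \<le> c * sqrt (real n / ln (real n))"
      unfolding c_def using n by (intro mult_right_mono) auto
    then have A_sup: "AE x in lborel. x \<in> {0..1} \<longrightarrow> \<bar>A n l k x\<bar> \<le> c * sqrt (real n / ln (real n))"
      if "l \<le> Ln \<alpha> n" "k < 2^l" for l k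
      using A_inf[OF n that] by (auto elim!: eventually_mono)
    have "Gamma \<psi> f0 n (Ln \<alpha> n) (A n) \<omega> x - wproj \<psi> (\<lambda>y. ln (f0 y)) (Ln \<alpha> n) x
        = 1 / sqrt (real n) * (\<Sum>l\<le>Ln \<alpha> n. \<Sum>k<2^l. Wn f0 n (A n l k) \<omega> * \<psi> l k x)" for \<omega> x
      by (simp add: Gamma_def)
    then show "(\<integral>\<^sup>+\<omega>. e2ennreal (linf01 (\<lambda>x. Gamma \<psi> f0 n (Ln \<alpha> n) (A n) \<omega> x
        - wproj \<psi> (\<lambda>y. ln (f0 y)) (Ln \<alpha> n) x)) \<partial>sample_space f0 n)
      \<le> ennreal (\<bar>C\<psi>\<bar> * (4 * (10 * c + D0 * c2\<^sup>2 / (2 * c))) * (ln (real n) / real n) powr (\<alpha> / (2 * \<alpha> + 1)))"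
      using nn_integral_linf01_wavelet_noise_le[OF sample alpha_pos n _ psi_meas psi_loc A_meas[OF n] A_sup A_L2[OF n]]
      by (simp add: c_def)
  qed
qed

end
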